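(* Let $k_0,k_1,k_{-1},k_2,e_T$ be positive real numbers and consider the system \[ \dot s = k_0-k_1(e_T-c)s+k_{-1}c,\qquad \dot c = k_1(e_T-c)s-(k_{-1}+k_2)c . \] Let $W_1:=\{(s,c): s\ge 0,\ \max\{0,\frac{k_1e_Ts-k_0}{k_1s+k_{-1}}\}\le c\le \frac{k_1e_Ts}{k_1s+k_{-1}+k_2}\}$, let $w(s):=\frac{k_1e_Ts}{k_1s+k_{-1}+k_2}$, and set \[ \varepsilon_c:=\frac{k_1e_T}{k_{-1}+k_2},\qquad \tau_0:=k_{-1}+k_2,\qquad \varepsilon^*:=\frac{k_0k_1e_T}{(k_{-1}+k_2)^2}. \] Let $(s(t),c(t))$ be a solution with initial value in $W_1$, let $L(t):=|c(t)-w(s(t))|$, and let $v:=\sup_{t\ge0}|\dot s(t)|$ along this solution. Then for all $t\ge 0$, with $\tau:=\tau_0 t=(k_{-1}+k_2)t$, \[ L(t)^2\le L(0)^2e^{-\tau}+\frac{(\varepsilon_c v)^2}{\tau_0^2}\left(1-e^{-\tau}\right) \quad\text{and}\quad L(t)^2\le L(0)^2e^{-\tau}+\frac{(\varepsilon_c k_0)^2}{(k_{-1}+k_2)^2}=L(0)^2e^{-\tau}+(\varepsilon^* )^2 . \] In particular the solution approaches the curve $c=w(s)$ up to an error $(\varepsilon^* )^2$ in $L^2$, at exponential rate $k_{-1}+k_2$.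
   Context: The curve $c=w(s)$ is the quasi-steady-state (QSS) variety, i.e. the $c$-nullcline of the system; $W_1$ is the region between the $s$-nullcline (or the $s$-axis) and the $c$-nullcline. *)

theory Defs
  imports "HOL-Analysis.Analysis"
begin

text \<open>Right-hand sides of the system
  s' = k0 - k1 (eT - c) s + km1 c,   c' = k1 (eT - c) s - (km1 + k2) c.
  Here km1 stands for k_{-1}.\<close>

definition fs :: "real \<Rightarrow> real \<Rightarrow> real \<Rightarrow> real \<Rightarrow> real \<Rightarrow> real \<Rightarrow> real \<Rightarrow> real" where
  "fs k0 k1 km1 k2 eT s c = k0 - k1 * (eT - c) * s + km1 * c"

definition fc :: "real \<Rightarrow> real \<Rightarrow> real \<Rightarrow> real \<Rightarrow> real \<Rightarrow> real \<Rightarrow> real \<Rightarrow> real" where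
  "fc k0 k1 km1 k2 eT s c = k1 * (eT - c) * s - (km1 + k2) * c"

definition w :: "real \<Rightarrow> real \<Rightarrow> real \<Rightarrow> real \<Rightarrow> real \<Rightarrow> real" where
  "w k1 km1 k2 eT s = k1 * eT * s / (k1 * s + km1 + k2)"

definition W1 :: "real \<Rightarrow> real \<Rightarrow> real \<Rightarrow> real \<Rightarrow> real \<Rightarrow> (real \<times> real) set" where
  "W1 k0 k1 km1 k2 eT = {(s, c). s \<ge> 0 \<and>
      max 0 ((k1 * eT * s - k0) / (k1 * s + km1)) \<le> c \<and>
      c \<le> k1 * eT * s / (k1 * s + km1 + k2)}"

definition eps_c :: "real \<Rightarrow> real \<Rightarrow> real \<Rightarrow> real \<Rightarrow> real" where
  "eps_c k1 km1 k2 eT = k1 * eT / (km1 + k2)"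

definition tau0 :: "real \<Rightarrow> real \<Rightarrow> real" where
  "tau0 km1 k2 = km1 + k2"

definition eps_star :: "real \<Rightarrow> real \<Rightarrow> real \<Rightarrow> real \<Rightarrow> real \<Rightarrow> real" where
  "eps_star k0 k1 km1 k2 eT = k0 * k1 * eT / (km1 + k2)^2"

end

theory Submission
  imports Defs
begin

(* Along a solution the velocities s' and c' obey the linear system
     (s')' = (k1 s + km1) c' - k1 (eT - c) s',   (c')' = k1 (eT - c) s' - (k1 s + km1 + k2) c',
   which is cooperative as long as s >= 0 and c < eT.  A cooperative system cannot leave the
   quadrant s', c' >= 0, and W1 lies in that quadrant; by continuous induction the velocities stay
   nonnegative for all time, so s and c stay nonnegative, c < eT, and 0 <= s' <= k0 because
   s' + c' = k0 - k2 c.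
   Off the nullcline, c' = -(k1 s + km1 + k2) (c - w s), so u = c - w s satisfies
   u' = -(k1 s + tau0) u - w'(s) s' with 0 <= w'(s) <= eps_c.  Hence
   (u^2)' <= -tau0 u^2 + (eps_c v)^2 / tau0, and a linear Gronwall estimate gives the bound. *)

lemma has_real_derivative_min_zero_power2:
  "((\<lambda>x::real. (min x 0)\<^sup>2) has_real_derivative 2 * min x 0) (at x)"
proof (cases x "0::real" rule: linorder_cases)
  case less
  have "((\<lambda>x::real. x\<^sup>2) has_real_derivative 2 * min x 0) (at x)"
    using less by (auto intro!: derivative_eq_intros)
  then show ?thesis
    by (rule has_field_derivative_transform_within_open[where S = "{..<0}"]) (use less in auto)
next
  case equal
  have "\<forall>\<^sub>F y in at 0. ((min y 0)\<^sup>2 - (min 0 0)\<^sup>2) / (y - 0) = min y (0::real)"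
    by (auto simp: eventually_at_filter power2_eq_square min_def)
  moreover have "((\<lambda>y::real. min y 0) \<longlongrightarrow> 0) (at 0)"
    by (rule tendsto_eq_intros refl)+ simp
  ultimately show ?thesis
    using equal by (simp add: has_field_derivative_iff tendsto_cong)
next
  case greater
  have "((\<lambda>x::real. 0) has_real_derivative 2 * min x 0) (at x)"
    using greater by simp
  then show ?thesis
    by (rule has_field_derivative_transform_within_open[where S = "{0<..}"]) (use greater in auto)
qed

lemma nonpos_derivative_imp_le:
  fixes f f' :: "real \<Rightarrow> real"
  assumes "a \<le> b"
    and "\<And>t. t \<in> {a..b} \<Longrightarrow> (f has_real_derivative f' t) (at t within {a..b})"
    and "\<And>t. t \<in> {a..b} \<Longrightarrow> f' t \<le> 0"
  shows "f b \<le> f a"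
proof -
  have "\<exists>x\<in>{a..b}. f b - f a = f' x * (b - a)"
    by (rule mvt_very_simple[where f' = "\<lambda>x. (*) (f' x)"])
      (use assms in \<open>auto simp: has_field_derivative_def\<close>)
  then obtain x where "x \<in> {a..b}" "f b - f a = f' x * (b - a)" ..
  moreover have "f' x * (b - a) \<le> 0"
    using assms \<open>x \<in> {a..b}\<close> by (simp add: mult_nonpos_nonneg)
  ultimately show ?thesis
    by simp
qed

lemma nonneg_derivative_imp_ge_initial:
  fixes f f' :: "real \<Rightarrow> real"
  assumes deriv: "\<And>u. 0 \<le> u \<Longrightarrow> (f has_real_derivative f' u) (at u within {0..})"
    and "\<And>u. 0 \<le> u \<Longrightarrow> u \<le> t \<Longrightarrow> 0 \<le> f' u" and "0 \<le> t"
  shows "f 0 \<le> f t"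
proof -
  have "- f t \<le> - f 0"
  proof (rule nonpos_derivative_imp_le[where f = "\<lambda>u. - f u" and f' = "\<lambda>u. - f' u"])
    fix u assume "u \<in> {0..t}"
    then show "((\<lambda>u. - f u) has_real_derivative - f' u) (at u within {0..t})"
      by (intro DERIV_minus has_field_derivative_subset[OF deriv]) auto
  qed (use assms in auto)
  then show ?thesis
    by simp
qed

lemma linear_differential_inequality:
  fixes y y' :: "real \<Rightarrow> real"
  assumes "K \<noteq> 0" "0 \<le> T"
    and deriv: "\<And>t. t \<in> {0..T} \<Longrightarrow> (y has_real_derivative y' t) (at t within {0..T})"
    and ineq: "\<And>t. t \<in> {0..T} \<Longrightarrow> y' t \<le> B - K * y t"
  shows "y T \<le> y 0 * exp (- (K * T)) + B / K * (1 - exp (- (K * T)))"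
proof -
  define z where "z t = (y t - B / K) * exp (K * t)" for t
  have "z T \<le> z 0"
  proof (rule nonpos_derivative_imp_le[OF \<open>0 \<le> T\<close>])
    fix t assume t: "t \<in> {0..T}"
    show "(z has_real_derivative (y' t + K * (y t - B / K)) * exp (K * t)) (at t within {0..T})"
      unfolding z_def by (rule derivative_eq_intros deriv[OF t] refl)+ (simp add: algebra_simps)
    show "(y' t + K * (y t - B / K)) * exp (K * t) \<le> 0"
    proof (rule mult_nonpos_nonneg)
      show "y' t + K * (y t - B / K) \<le> 0"
        using ineq[OF t] \<open>K \<noteq> 0\<close> by (simp add: algebra_simps)
    qed simp
  qed
  then have "(y T - B / K) * exp (K * T) * exp (- (K * T)) \<le> (y 0 - B / K) * exp (- (K * T))"
    by (simp add: z_def)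
  then show ?thesis
    by (simp add: exp_minus_inverse algebra_simps)
qed

lemma cooperative_negative_parts_le:
  fixes a b d p q :: real
  assumes "0 \<le> a" "0 \<le> b" "0 \<le> d"
  shows "2 * min p 0 * (b * q - a * p) + 2 * min q 0 * (a * p - d * q)
    \<le> (a + b) * ((min p 0)\<^sup>2 + (min q 0)\<^sup>2)"
proof (cases "p < 0"; cases "q < 0")
  assume "p < 0" "q < 0"
  have "(a + b) * (2 * p * q) \<le> (a + b) * (p\<^sup>2 + q\<^sup>2)"
    using assms by (intro mult_left_mono sum_squares_bound) auto
  moreover have "0 \<le> a * p\<^sup>2" "0 \<le> d * q\<^sup>2" "0 \<le> b * q\<^sup>2" "0 \<le> a * q\<^sup>2"
    using assms by simp_all
  ultimately show ?thesis
    using \<open>p < 0\<close> \<open>q < 0\<close> by (simp add: algebra_simps power2_eq_square)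
next
  assume "p < 0" "\<not> q < 0"
  then have "b * p * q \<le> 0" "0 \<le> a * p\<^sup>2" "0 \<le> b * p\<^sup>2"
    using assms by (simp_all add: mult_nonpos_nonneg mult_nonneg_nonpos)
  then show ?thesis
    using \<open>p < 0\<close> \<open>\<not> q < 0\<close> by (simp add: algebra_simps power2_eq_square)
next
  assume "\<not> p < 0" "q < 0"
  then have "a * p * q \<le> 0" "0 \<le> d * q\<^sup>2" "0 \<le> a * q\<^sup>2" "0 \<le> b * q\<^sup>2"
    using assms by (simp_all add: mult_nonneg_nonpos)
  then show ?thesis
    using \<open>\<not> p < 0\<close> \<open>q < 0\<close> by (simp add: algebra_simps power2_eq_square)
qed simp

lemma nonneg_real_induct [consumes 1, case_names limit extend]:
  fixes P :: "real \<Rightarrow> bool"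
  assumes "0 \<le> t"
    and limit: "\<And>T. 0 \<le> T \<Longrightarrow> (\<And>t. 0 \<le> t \<Longrightarrow> t < T \<Longrightarrow> P t) \<Longrightarrow> P T"
    and extend: "\<And>T. 0 \<le> T \<Longrightarrow> (\<And>t. 0 \<le> t \<Longrightarrow> t \<le> T \<Longrightarrow> P t) \<Longrightarrow>
      \<exists>\<delta>>0. \<forall>t. T \<le> t \<and> t \<le> T + \<delta> \<longrightarrow> P t"
  shows "P t"
proof (rule ccontr)
  define B where "B = {t. 0 \<le> t \<and> \<not> P t}"
  define T where "T = Inf B"
  assume "\<not> P t"
  then have "B \<noteq> {}" "bdd_below B"
    using \<open>0 \<le> t\<close> by (auto simp: B_def intro: bdd_belowI[of _ 0])
  have "0 \<le> T"
    unfolding T_def by (rule cInf_greatest[OF \<open>B \<noteq> {}\<close>]) (simp add: B_def)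
  have before: "P t" if "0 \<le> t" "t < T" for t
  proof (rule ccontr)
    assume "\<not> P t"
    then have "T \<le> t"
      unfolding T_def using that \<open>bdd_below B\<close> by (intro cInf_lower) (simp_all add: B_def)
    with \<open>t < T\<close> show False
      by simp
  qed
  have upto: "P t" if "0 \<le> t" "t \<le> T" for t
  proof (cases "t < T")
    case True
    then show ?thesis
      using before[OF \<open>0 \<le> t\<close>] by simp
  next
    case False
    then show ?thesis
      using limit[OF \<open>0 \<le> T\<close> before] \<open>t \<le> T\<close> by simp
  qed
  obtain \<delta> where "\<delta> > 0" and after: "\<And>t. T \<le> t \<Longrightarrow> t \<le> T + \<delta> \<Longrightarrow> P t"
    using extend[OF \<open>0 \<le> T\<close> upto] by blast
  have "T + \<delta> \<le> Inf B"
  proof (rule cInf_greatest[OF \<open>B \<noteq> {}\<close>])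
    fix x assume "x \<in> B"
    then have "0 \<le> x" "\<not> P x"
      by (simp_all add: B_def)
    show "T + \<delta> \<le> x"
    proof (rule ccontr)
      assume "\<not> T + \<delta> \<le> x"
      then have "x \<le> T \<or> T \<le> x \<and> x \<le> T + \<delta>"
        by auto
      then have "P x"
        using upto[OF \<open>0 \<le> x\<close>] after by blast
      with \<open>\<not> P x\<close> show False ..
    qed
  qed
  with \<open>\<delta> > 0\<close> show False
    by (simp add: T_def)
qed

lemma cooperative_system_preserves_nonneg:
  fixes p q a b d :: "real \<Rightarrow> real"
  assumes "0 \<le> T"
    and dp: "\<And>t. t \<in> {0..T} \<Longrightarrow> (p has_real_derivative b t * q t - a t * p t) (at t within {0..T})"
    and dq: "\<And>t. t \<in> {0..T} \<Longrightarrow> (q has_real_derivative a t * p t - d t * q t) (at t within {0..T})"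
    and coeffs_nonneg: "\<And>t. t \<in> {0..T} \<Longrightarrow> 0 \<le> a t \<and> 0 \<le> b t \<and> 0 \<le> d t"
    and a_cont: "continuous_on {0..T} a" and b_cont: "continuous_on {0..T} b"
    and p0: "0 \<le> p 0" and q0: "0 \<le> q 0"
  shows "0 \<le> p T \<and> 0 \<le> q T"
proof -
  have "continuous_on {0..T} (\<lambda>t. a t + b t)"
    using a_cont b_cont by (rule continuous_on_add)
  moreover have "{0..T} \<noteq> {}"
    using \<open>0 \<le> T\<close> by simp
  ultimately obtain t\<^sub>m where "t\<^sub>m \<in> {0..T}" and max: "\<forall>t\<in>{0..T}. a t + b t \<le> a t\<^sub>m + b t\<^sub>m"
    using continuous_attains_sup[OF compact_Icc] by blast
  define M where "M = a t\<^sub>m + b t\<^sub>m + 1"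
  have "M > 0"
    using coeffs_nonneg[OF \<open>t\<^sub>m \<in> {0..T}\<close>] by (simp add: M_def)
  \<comment> \<open>squared distance of (p, q) from the quadrant: it vanishes at 0 and obeys V' \<le> M V\<close>
  define V where "V t = (min (p t) 0)\<^sup>2 + (min (q t) 0)\<^sup>2" for t
  define V' where "V' t = 2 * min (p t) 0 * (b t * q t - a t * p t) + 2 * min (q t) 0 * (a t * p t - d t * q t)" for t
  have "V T \<le> V 0 * exp (- (- M * T)) + 0 / - M * (1 - exp (- (- M * T)))"
  proof (rule linear_differential_inequality[where K = "- M" and B = 0 and y' = V'])
    fix t assume t: "t \<in> {0..T}"
    show "(V has_real_derivative V' t) (at t within {0..T})"
      unfolding V_def[abs_def] V'_def
      by (intro DERIV_add DERIV_chain2[OF has_real_derivative_min_zero_power2] dp dq t)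
    have "V' t \<le> (a t + b t) * V t"
      unfolding V'_def V_def using coeffs_nonneg[OF t] by (intro cooperative_negative_parts_le) auto
    also have "\<dots> \<le> M * V t"
      using bspec[OF max t] by (intro mult_right_mono) (simp_all add: M_def V_def)
    finally show "V' t \<le> 0 - - M * V t"
      by simp
  qed (use \<open>M > 0\<close> \<open>0 \<le> T\<close> in auto)
  then have "(min (p T) 0)\<^sup>2 + (min (q T) 0)\<^sup>2 \<le> 0"
    using p0 q0 by (simp add: V_def)
  then have "min (p T) 0 = 0 \<and> min (q T) 0 = 0"
    by (simp only: sum_power2_le_zero_iff)
  then show ?thesis
    by linarith
qed

lemma W1_imp_nonneg:
  assumes "0 < k1" "0 < km1" "0 < k2" and "(s, c) \<in> W1 k0 k1 km1 k2 eT"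
  shows "0 \<le> s \<and> 0 \<le> c \<and> 0 \<le> fs k0 k1 km1 k2 eT s c \<and> 0 \<le> fc k0 k1 km1 k2 eT s c"
proof -
  have "0 \<le> s" "0 \<le> c"
    and "(k1 * eT * s - k0) / (k1 * s + km1) \<le> c"
    and "c \<le> k1 * eT * s / (k1 * s + km1 + k2)"
    using assms(4) by (auto simp: W1_def)
  moreover have "0 < k1 * s + km1" "0 < k1 * s + km1 + k2"
    using assms(1-3) \<open>0 \<le> s\<close> by (simp_all add: add_nonneg_pos add_pos_pos)
  ultimately show ?thesis
    by (simp add: fs_def fc_def divide_le_eq le_divide_eq algebra_simps)
qed

lemma fc_nonneg_imp_less_eT:
  assumes "0 < k1" "0 < km1" "0 < k2" "0 < eT" "0 \<le> s"
    and "0 \<le> fc k0 k1 km1 k2 eT s c"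
  shows "c < eT"
proof (rule ccontr)
  assume "\<not> c < eT"
  then have "k1 * (eT - c) \<le> 0" and c_pos: "0 < (km1 + k2) * c"
    using assms(1-4) by (simp_all add: mult_nonneg_nonpos)
  then have "k1 * (eT - c) * s \<le> 0"
    using \<open>0 \<le> s\<close> by (simp add: mult_nonpos_nonneg)
  with assms(6) c_pos show False
    by (simp add: fc_def)
qed

lemma fc_eq_qss_distance:
  assumes "k1 * s + km1 + k2 \<noteq> 0"
  shows "fc k0 k1 km1 k2 eT s c = - (k1 * s + km1 + k2) * (c - w k1 km1 k2 eT s)"
  using assms by (simp add: fc_def w_def field_simps)

lemma has_real_derivative_w:
  assumes "k1 * x + km1 + k2 \<noteq> 0"
  shows "(w k1 km1 k2 eT has_real_derivative k1 * eT * (km1 + k2) / (k1 * x + km1 + k2)\<^sup>2) (at x)"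
  unfolding w_def[abs_def]
  using assms by (auto intro!: derivative_eq_intros simp: field_simps power2_eq_square)

lemma w_slope_le_eps_c:
  assumes "0 < k1" "0 < km1" "0 < k2" "0 < eT" "0 \<le> x"
  shows "k1 * eT * (km1 + k2) / (k1 * x + km1 + k2)\<^sup>2 \<le> eps_c k1 km1 k2 eT"
proof -
  have "0 < km1 + k2" "km1 + k2 \<le> k1 * x + km1 + k2"
    using assms by simp_all
  then have "0 < k1 * x + km1 + k2" "(km1 + k2)\<^sup>2 \<le> (k1 * x + km1 + k2)\<^sup>2"
    by (auto intro: power_mono)
  then have "k1 * eT * (km1 + k2) / (k1 * x + km1 + k2)\<^sup>2 \<le> k1 * eT * (km1 + k2) / (km1 + k2)\<^sup>2"
    using assms \<open>0 < km1 + k2\<close> by (intro divide_left_mono) simp_all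
  also have "\<dots> = eps_c k1 km1 k2 eT"
    using \<open>0 < km1 + k2\<close> by (simp add: eps_c_def power2_eq_square)
  finally show ?thesis .
qed

lemma eps_c_mult_k0:
  "eps_c k1 km1 k2 eT * k0 / (km1 + k2) = eps_star k0 k1 km1 k2 eT"
  by (simp add: eps_c_def eps_star_def power2_eq_square)

locale mm_trajectory =
  fixes k0 k1 km1 k2 eT :: real and s c :: "real \<Rightarrow> real"
  assumes rates_pos: "0 < k0" "0 < k1" "0 < km1" "0 < k2" "0 < eT"
    and s_deriv: "\<And>t. 0 \<le> t \<Longrightarrow> (s has_real_derivative fs k0 k1 km1 k2 eT (s t) (c t)) (at t within {0..})"
    and c_deriv: "\<And>t. 0 \<le> t \<Longrightarrow> (c has_real_derivative fc k0 k1 km1 k2 eT (s t) (c t)) (at t within {0..})"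
    and initial_in_W1: "(s 0, c 0) \<in> W1 k0 k1 km1 k2 eT"
begin

definition s' :: "real \<Rightarrow> real" where
  "s' t = fs k0 k1 km1 k2 eT (s t) (c t)"

definition c' :: "real \<Rightarrow> real" where
  "c' t = fc k0 k1 km1 k2 eT (s t) (c t)"

lemma has_derivative_s':
  assumes "0 \<le> t"
  shows "(s' has_real_derivative (k1 * s t + km1) * c' t - k1 * (eT - c t) * s' t) (at t within {0..})"
  unfolding s'_def[abs_def] fs_def
  by (rule derivative_eq_intros s_deriv c_deriv assms refl)+ (simp add: s'_def c'_def fs_def fc_def algebra_simps)

lemma has_derivative_c':
  assumes "0 \<le> t"
  shows "(c' has_real_derivative k1 * (eT - c t) * s' t - (k1 * s t + km1 + k2) * c' t) (at t within {0..})"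
  unfolding c'_def[abs_def] fc_def
  by (rule derivative_eq_intros s_deriv c_deriv assms refl)+ (simp add: s'_def c'_def fs_def fc_def algebra_simps)

lemma continuous_on_trajectory:
  "continuous_on {0..T} s" "continuous_on {0..T} c" "continuous_on {0..T} s'" "continuous_on {0..T} c'"
  by (rule DERIV_continuous_on, rule has_field_derivative_subset,
      (rule s_deriv c_deriv has_derivative_s' has_derivative_c'; simp), force)+

lemma trajectory_nonneg_if_velocities_nonneg:
  assumes "\<And>u. 0 \<le> u \<Longrightarrow> u \<le> t \<Longrightarrow> 0 \<le> s' u \<and> 0 \<le> c' u" "0 \<le> t"
  shows "0 \<le> s t \<and> 0 \<le> c t"
proof -
  have "s 0 \<le> s t"
    using assms by (intro nonneg_derivative_imp_ge_initial[OF s_deriv]) (simp_all add: s'_def)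
  moreover have "c 0 \<le> c t"
    using assms by (intro nonneg_derivative_imp_ge_initial[OF c_deriv]) (simp_all add: c'_def)
  moreover have "0 \<le> s 0" "0 \<le> c 0"
    using W1_imp_nonneg[OF _ _ _ initial_in_W1] rates_pos by auto
  ultimately show ?thesis
    by simp
qed

lemma cooperative_coefficients_pos_beyond:
  assumes "0 \<le> T" and nonneg: "\<And>u. 0 \<le> u \<Longrightarrow> u \<le> T \<Longrightarrow> 0 \<le> s' u \<and> 0 \<le> c' u"
  shows "\<exists>\<delta>>0. \<forall>u. 0 \<le> u \<and> u \<le> T + \<delta> \<longrightarrow> 0 < k1 * s u + km1 \<and> c u < eT"
proof -
  have before: "0 < k1 * s u + km1 \<and> c u < eT" if "0 \<le> u" "u \<le> T" for u
  proof -
    have "0 \<le> s u" "0 \<le> c' u"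
      using trajectory_nonneg_if_velocities_nonneg[of u] nonneg that by simp_all
    then show ?thesis
      using fc_nonneg_imp_less_eT[of k1 km1 k2 eT "s u" k0 "c u"] rates_pos
      by (simp add: c'_def add_nonneg_pos)
  qed
  have "{T<..} \<subseteq> {0..}"
    using \<open>0 \<le> T\<close> by auto
  then have s_lim: "(s \<longlongrightarrow> s T) (at_right T)" and c_lim: "(c \<longlongrightarrow> c T) (at_right T)"
    using DERIV_continuous[OF s_deriv[OF \<open>0 \<le> T\<close>]] DERIV_continuous[OF c_deriv[OF \<open>0 \<le> T\<close>]]
    by (simp_all add: continuous_within tendsto_within_subset)
  have "((\<lambda>u. k1 * s u + km1) \<longlongrightarrow> k1 * s T + km1) (at_right T)"
    using s_lim by (intro tendsto_intros)
  moreover note c_lim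
  moreover have "0 < k1 * s T + km1" "c T < eT"
    using before[OF \<open>0 \<le> T\<close>] by simp_all
  ultimately have "\<forall>\<^sub>F u in at_right T. 0 < k1 * s u + km1 \<and> c u < eT"
    by (intro eventually_conj order_tendstoD)
  then obtain b where "T < b" and after: "\<And>u. T < u \<Longrightarrow> u < b \<Longrightarrow> 0 < k1 * s u + km1 \<and> c u < eT"
    by (auto simp: eventually_at_right_field)
  have "0 < k1 * s u + km1 \<and> c u < eT" if "0 \<le> u" "u \<le> T + (b - T) / 2" for u
  proof (cases "u \<le> T")
    case True
    with before that show ?thesis
      by simp
  next
    case False
    moreover have "u < b"
      using that \<open>T < b\<close> by (simp add: field_simps)
    ultimately show ?thesis
      using after by simp
  qed
  moreover have "0 < (b - T) / 2"
    using \<open>T < b\<close> by simp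
  ultimately show ?thesis
    by blast
qed

lemma velocities_nonneg_beyond:
  assumes "0 \<le> T" and nonneg: "\<And>u. 0 \<le> u \<Longrightarrow> u \<le> T \<Longrightarrow> 0 \<le> s' u \<and> 0 \<le> c' u"
  shows "\<exists>\<delta>>0. \<forall>t. T \<le> t \<and> t \<le> T + \<delta> \<longrightarrow> 0 \<le> s' t \<and> 0 \<le> c' t"
proof -
  obtain \<delta> where "0 < \<delta>"
    and coeffs: "\<And>u. 0 \<le> u \<Longrightarrow> u \<le> T + \<delta> \<Longrightarrow> 0 < k1 * s u + km1 \<and> c u < eT"
    using cooperative_coefficients_pos_beyond[OF assms] by blast
  have "0 \<le> s' t \<and> 0 \<le> c' t" if "T \<le> t" "t \<le> T + \<delta>" for t
  proof (rule cooperative_system_preserves_nonneg[where T = t and p = s' and q = c'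
        and a = "\<lambda>u. k1 * (eT - c u)" and b = "\<lambda>u. k1 * s u + km1" and d = "\<lambda>u. k1 * s u + km1 + k2"])
    show "0 \<le> t"
      using \<open>0 \<le> T\<close> that by simp
    show "(s' has_real_derivative (k1 * s u + km1) * c' u - k1 * (eT - c u) * s' u) (at u within {0..t})"
      "(c' has_real_derivative k1 * (eT - c u) * s' u - (k1 * s u + km1 + k2) * c' u) (at u within {0..t})"
      if "u \<in> {0..t}" for u
      using that by (auto intro!: has_field_derivative_subset[OF has_derivative_s']
          has_field_derivative_subset[OF has_derivative_c'])
    show "0 \<le> k1 * (eT - c u) \<and> 0 \<le> k1 * s u + km1 \<and> 0 \<le> k1 * s u + km1 + k2"
      if "u \<in> {0..t}" for u
      using coeffs[of u] that \<open>t \<le> T + \<delta>\<close> rates_pos by simp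
    show "continuous_on {0..t} (\<lambda>u. k1 * (eT - c u))" "continuous_on {0..t} (\<lambda>u. k1 * s u + km1)"
      by (intro continuous_intros continuous_on_trajectory)+
    show "0 \<le> s' 0" "0 \<le> c' 0"
      using nonneg \<open>0 \<le> T\<close> by auto
  qed
  with \<open>0 < \<delta>\<close> show ?thesis
    by blast
qed

lemma velocities_nonneg:
  assumes "0 \<le> t"
  shows "0 \<le> s' t \<and> 0 \<le> c' t"
  using assms
proof (induction t rule: nonneg_real_induct)
  case (limit T)
  show ?case
  proof (cases "T = 0")
    case True
    then show ?thesis
      using W1_imp_nonneg[OF _ _ _ initial_in_W1] rates_pos by (simp add: s'_def c'_def)
  next
    case False
    with limit have "0 < T" "\<forall>t\<in>{0..<T}. 0 \<le> s' t \<and> 0 \<le> c' t"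
      by auto
    then show ?thesis
      using continuous_ge_on_closure[of "{0..<T}" s' T 0] continuous_ge_on_closure[of "{0..<T}" c' T 0]
      by (simp add: continuous_on_trajectory)
  qed
next
  case (extend T)
  then show ?case
    by (rule velocities_nonneg_beyond)
qed

lemma abs_s'_le_k0:
  assumes "0 \<le> t"
  shows "\<bar>s' t\<bar> \<le> k0"
proof -
  have "s' t + c' t = k0 - k2 * c t"
    by (simp add: s'_def c'_def fs_def fc_def algebra_simps)
  moreover have "0 \<le> k2 * c t"
    using trajectory_nonneg_if_velocities_nonneg[OF velocities_nonneg assms] rates_pos by simp
  ultimately show ?thesis
    using velocities_nonneg[OF assms] by linarith
qed

lemma qss_distance_has_derivative:
  assumes "0 \<le> t"
  shows "((\<lambda>t. c t - w k1 km1 k2 eT (s t)) has_real_derivative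
      c' t - k1 * eT * (km1 + k2) / (k1 * s t + km1 + k2)\<^sup>2 * s' t) (at t within {0..})"
proof -
  have "0 \<le> s t"
    using trajectory_nonneg_if_velocities_nonneg[OF velocities_nonneg assms] by simp
  then have "0 \<le> k1 * s t"
    using rates_pos by simp
  then have "k1 * s t + km1 + k2 \<noteq> 0"
    using rates_pos by linarith
  then show ?thesis
    using DERIV_diff[OF c_deriv[OF assms] DERIV_chain2[OF has_real_derivative_w s_deriv[OF assms]]]
    by (simp add: s'_def c'_def)
qed

lemma qss_distance_estimate:
  assumes bound: "\<And>t. 0 \<le> t \<Longrightarrow> \<bar>s' t\<bar> \<le> V" and "0 \<le> t"
  shows "(c t - w k1 km1 k2 eT (s t))\<^sup>2 \<le> (c 0 - w k1 km1 k2 eT (s 0))\<^sup>2 * exp (- (tau0 km1 k2 * t))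
    + (eps_c k1 km1 k2 eT * V)\<^sup>2 / (tau0 km1 k2)\<^sup>2 * (1 - exp (- (tau0 km1 k2 * t)))"
proof -
  define K where "K = km1 + k2"
  define E where "E = eps_c k1 km1 k2 eT * V"
  define u where "u t = c t - w k1 km1 k2 eT (s t)" for t
  define g where "g t = k1 * eT * (km1 + k2) / (k1 * s t + km1 + k2)\<^sup>2" for t
  have "0 < K"
    using rates_pos by (simp add: K_def)
  have "(u t)\<^sup>2 \<le> (u 0)\<^sup>2 * exp (- (K * t)) + E\<^sup>2 / K / K * (1 - exp (- (K * t)))"
  proof (rule linear_differential_inequality[where y' = "\<lambda>x. 2 * u x * (c' x - g x * s' x)"])
    fix x assume x: "x \<in> {0..t}"
    have "(u has_real_derivative c' x - g x * s' x) (at x within {0..})"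
      unfolding u_def[abs_def] g_def using x by (intro qss_distance_has_derivative) simp
    then show "((\<lambda>x. (u x)\<^sup>2) has_real_derivative 2 * u x * (c' x - g x * s' x)) (at x within {0..t})"
      by (auto intro!: derivative_eq_intros intro: has_field_derivative_subset)
    have "0 \<le> s x"
      using trajectory_nonneg_if_velocities_nonneg[OF velocities_nonneg] x by simp
    then have "0 \<le> k1 * s x"
      using rates_pos by simp
    then have c'_eq: "c' x = - (k1 * s x + K) * u x"
      using fc_eq_qss_distance[of k1 "s x" km1 k2 k0 eT "c x"] rates_pos
      by (simp add: c'_def u_def K_def add.assoc)
    have "0 \<le> g x" "g x \<le> eps_c k1 km1 k2 eT"
      using w_slope_le_eps_c[OF rates_pos(2-5) \<open>0 \<le> s x\<close>] rates_pos by (simp_all add: g_def)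
    then have "g x * \<bar>s' x\<bar> \<le> E"
      using bound[of x] x rates_pos by (auto simp: E_def intro!: mult_mono)
    have "- (u x * (g x * s' x)) \<le> \<bar>u x * (g x * s' x)\<bar>"
      by (rule abs_ge_minus_self)
    also have "\<dots> = \<bar>u x\<bar> * (g x * \<bar>s' x\<bar>)"
      using \<open>0 \<le> g x\<close> by (simp add: abs_mult)
    also have "\<dots> \<le> \<bar>u x\<bar> * E"
      using \<open>g x * \<bar>s' x\<bar> \<le> E\<close> by (simp add: mult_left_mono)
    finally have drift: "- (u x * (g x * s' x)) \<le> \<bar>u x\<bar> * E" .
    have "2 * K * \<bar>u x\<bar> * E \<le> K\<^sup>2 * (u x)\<^sup>2 + E\<^sup>2"
      using sum_squares_bound[of "K * \<bar>u x\<bar>" E] by (simp add: power_mult_distrib algebra_simps)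
    then have young: "2 * \<bar>u x\<bar> * E \<le> K * (u x)\<^sup>2 + E\<^sup>2 / K"
      using \<open>0 < K\<close> by (simp add: field_simps power2_eq_square)
    have "0 \<le> k1 * s x * (u x)\<^sup>2"
      using \<open>0 \<le> k1 * s x\<close> by simp
    moreover have "2 * u x * (c' x - g x * s' x)
        = - 2 * (k1 * s x * (u x)\<^sup>2) - 2 * K * (u x)\<^sup>2 - 2 * (u x * (g x * s' x))"
      by (simp add: c'_eq power2_eq_square algebra_simps)
    ultimately show "2 * u x * (c' x - g x * s' x) \<le> E\<^sup>2 / K - K * (u x)\<^sup>2"
      using drift young by linarith
  qed (use \<open>0 < K\<close> \<open>0 \<le> t\<close> in auto)
  then show ?thesis
    by (simp add: u_def E_def K_def tau0_def power2_eq_square)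
qed

lemma qss_distance_estimate_k0:
  assumes "0 \<le> t"
  shows "(c t - w k1 km1 k2 eT (s t))\<^sup>2 \<le> (c 0 - w k1 km1 k2 eT (s 0))\<^sup>2 * exp (- (tau0 km1 k2 * t))
    + (eps_c k1 km1 k2 eT * k0)\<^sup>2 / (km1 + k2)\<^sup>2"
proof -
  have "(eps_c k1 km1 k2 eT * k0)\<^sup>2 / (tau0 km1 k2)\<^sup>2 * (1 - exp (- (tau0 km1 k2 * t)))
      \<le> (eps_c k1 km1 k2 eT * k0)\<^sup>2 / (km1 + k2)\<^sup>2"
    unfolding tau0_def by (intro mult_left_le) simp_all
  then show ?thesis
    using qss_distance_estimate[OF abs_s'_le_k0 assms] by linarith
qed

end

theorem proposition4p5:
  fixes k0 k1 km1 k2 eT :: real and s c :: "real \<Rightarrow> real"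
  assumes pos: "k0 > 0" "k1 > 0" "km1 > 0" "k2 > 0" "eT > 0"
    and ds: "\<And>t. t \<ge> 0 \<Longrightarrow>
       (s has_real_derivative fs k0 k1 km1 k2 eT (s t) (c t)) (at t within {0..})"
    and dc: "\<And>t. t \<ge> 0 \<Longrightarrow>
       (c has_real_derivative fc k0 k1 km1 k2 eT (s t) (c t)) (at t within {0..})"
    and init: "(s 0, c 0) \<in> W1 k0 k1 km1 k2 eT"
  defines "L \<equiv> \<lambda>t. \<bar>c t - w k1 km1 k2 eT (s t)\<bar>"
    and "v \<equiv> Sup ((\<lambda>t. \<bar>fs k0 k1 km1 k2 eT (s t) (c t)\<bar>) ` {0..})"
  shows "\<forall>t\<ge>0.
     L t ^ 2 \<le> L 0 ^ 2 * exp (- (tau0 km1 k2 * t))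
        + (eps_c k1 km1 k2 eT * v)^2 / (tau0 km1 k2)^2 * (1 - exp (- (tau0 km1 k2 * t)))
   \<and> L t ^ 2 \<le> L 0 ^ 2 * exp (- (tau0 km1 k2 * t))
        + (eps_c k1 km1 k2 eT * k0)^2 / (km1 + k2)^2
   \<and> L 0 ^ 2 * exp (- (tau0 km1 k2 * t)) + (eps_c k1 km1 k2 eT * k0)^2 / (km1 + k2)^2
      = L 0 ^ 2 * exp (- (tau0 km1 k2 * t)) + (eps_star k0 k1 km1 k2 eT)^2"
proof -
  interpret mm_trajectory k0 k1 km1 k2 eT s c
    using pos ds dc init by unfold_locales auto
  have "v = Sup ((\<lambda>t. \<bar>s' t\<bar>) ` {0..})"
    by (simp add: v_def s'_def)
  then have abs_s'_le_v: "\<bar>s' t\<bar> \<le> v" if "0 \<le> t" for t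
    using that abs_s'_le_k0 by (auto intro!: cSup_upper bdd_aboveI2[of _ _ k0])
  show ?thesis
  proof (intro allI impI conjI)
    fix t :: real assume "0 \<le> t"
    show "L t ^ 2 \<le> L 0 ^ 2 * exp (- (tau0 km1 k2 * t))
        + (eps_c k1 km1 k2 eT * v)^2 / (tau0 km1 k2)^2 * (1 - exp (- (tau0 km1 k2 * t)))"
      using qss_distance_estimate[OF abs_s'_le_v \<open>0 \<le> t\<close>] by (simp add: L_def)
    show "L t ^ 2 \<le> L 0 ^ 2 * exp (- (tau0 km1 k2 * t)) + (eps_c k1 km1 k2 eT * k0)^2 / (km1 + k2)^2"
      using qss_distance_estimate_k0[OF \<open>0 \<le> t\<close>] by (simp add: L_def)
    show "L 0 ^ 2 * exp (- (tau0 km1 k2 * t)) + (eps_c k1 km1 k2 eT * k0)^2 / (km1 + k2)^2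
      = L 0 ^ 2 * exp (- (tau0 km1 k2 * t)) + (eps_star k0 k1 km1 k2 eT)^2"
      by (simp add: eps_c_mult_k0[symmetric] power_divide)
  qed
qed

end
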